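(* Let $(x^k,\lambda^k)_{k\ge0}$ be generated by the proximal ADMM applied to (P). Suppose Assumption (A2) holds on a compact set $S$ with constants $M_f,L_f,C_\varphi,M_\varphi,L_\varphi$, and that $x^k,x^{k+1}\in S$ for some $k\ge1$. Then for every $i=0,\dots,n-1$, $$\|\lambda_i^{k+1}-\lambda_i^k\|^2\le\sum_{j=i}^{n-1}2(n-i)C_{j,i}^2\|x_{j+1}^{k+1}-x_{j+1}^k\|^2+\sum_{j=i}^{n-1}2(n-i)\tilde C_{j,i}^2\|x_{j+1}^k-x_{j+1}^{k-1}\|^2,$$ where for $j>i$ $$C_{j,i}=\frac{M_\varphi^{j-i}-M_\varphi^{n-i-1}}{1-M_\varphi}M_fL_\varphi+M_\varphi^{j-i}L_f+(2j-2i+1)\frac{M_\varphi^{j-i}}{\eta_{j+1}}+(2j-2i-1)\rho_jM_\varphi^{j-i},\qquad \tilde C_{j,i}=\frac{M_\varphi^{j-i}}{\eta_{j+1}}+\rho_jM_\varphi^{j-i},$$ and for $j=i$ $$C_{i,i}=\frac{1-M_\varphi^{n-i-1}}{1-M_\varphi}M_fL_\varphi+L_f+\frac{1}{\eta_{i+1}},\qquad \tilde C_{i,i}=\frac{1}{\eta_{i+1}}.$$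
   Context: Let $n,d\ge1$, and let $f_0,\dots,f_n:\mathbb{R}^d\to\mathbb{R}$ and $\varphi:\mathbb{R}^d\to\mathbb{R}^d$ be continuously differentiable; $\nabla\varphi$ denotes the Jacobian matrix and $\|\cdot\|$ the Euclidean norm / induced matrix 2-norm. Problem (P): minimize $\sum_{i=0}^n f_i(x_i)$ over $x=(x_0,\dots,x_n)\in(\mathbb{R}^d)^{n+1}$ subject to $x_{j+1}=\varphi(x_j)$, $j=0,\dots,n-1$. For penalty parameters $\rho_0,\dots,\rho_{n-1}>0$ and $\lambda=(\lambda_0,\dots,\lambda_{n-1})\in(\mathbb{R}^d)^n$, the augmented Lagrangian is $L_\rho(x,\lambda)=\sum_{i=0}^n f_i(x_i)+\sum_{i=0}^{n-1}\big(\langle\lambda_i,x_{i+1}-\varphi(x_i)\rangle+\frac{\rho_i}{2}\|x_{i+1}-\varphi(x_i)\|^2\big)$. Proximal ADMM: given $\eta_0,\dots,\eta_n>0$ and an initial point $(x^0,\lambda^0)$, for $k=0,1,\dots$, for $i=0,1,\dots,n$ in this order, $x_i^{k+1}$ is a (global) minimizer over $x_i$ of $L_\rho(x_0^{k+1},\dots,x_{i-1}^{k+1},x_i,x_{i+1}^k,\dots,x_n^k,\lambda^k)+\frac{1}{2\eta_i}\|x_i-x_i^k\|^2$ (assumed to exist), then $\lambda_j^{k+1}=\lambda_j^k+\rho_j(x_{j+1}^{k+1}-\varphi(x_j^{k+1}))$, $j=0,\dots,n-1$. Assumption (A2) on a compact set $S\subset(\mathbb{R}^d)^{n+1}$: there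 are constants $M_f,L_f,C_\varphi,M_\varphi,L_\varphi>0$ such that for all $x=(x_0,\dots,x_n),y=(y_0,\dots,y_n)\in S$ and all $i=0,\dots,n$: $\|\nabla f_i(x_i)\|\le M_f$, $\|\nabla f_i(x_i)-\nabla f_i(y_i)\|\le L_f\|x_i-y_i\|$, $\|\varphi(x_i)\|\le C_\varphi$, $\|\nabla\varphi(x_i)\|\le M_\varphi$, $\|\nabla\varphi(x_i)-\nabla\varphi(y_i)\|\le L_\varphi\|x_i-y_i\|$. Quotients of the form $\frac{M_\varphi^a-M_\varphi^b}{1-M_\varphi}$ ($a\le b$) denote $\sum_{l=a}^{b-1}M_\varphi^l$ (in particular when $M_\varphi=1$). *)

theory Defs
  imports "HOL-Analysis.Analysis"
begin

text \<open>Points of (R^d)^(n+1) are represented as functions nat => 'a (only indices 0..n matter);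
  'a is a Euclidean space of dimension d >= 1.\<close>

definition aug_lagr ::
  "(nat \<Rightarrow> 'a::euclidean_space \<Rightarrow> real) \<Rightarrow> ('a \<Rightarrow> 'a) \<Rightarrow> (nat \<Rightarrow> real) \<Rightarrow> nat
   \<Rightarrow> (nat \<Rightarrow> 'a) \<Rightarrow> (nat \<Rightarrow> 'a) \<Rightarrow> real" where
  "aug_lagr f phi rho n x lam =
     (\<Sum>i\<le>n. f i (x i)) +
     (\<Sum>i<n. inner (lam i) (x (Suc i) - phi (x i)) + rho i / 2 * (norm (x (Suc i) - phi (x i)))\<^sup>2)"

text \<open>Proximal ADMM: x k i is x_i^k, lam k i is lambda_i^k.\<close>
definition prox_admm ::
  "(nat \<Rightarrow> 'a::euclidean_space \<Rightarrow> real) \<Rightarrow> ('a \<Rightarrow> 'a) \<Rightarrow> (nat \<Rightarrow> real) \<Rightarrow> (nat \<Rightarrow> real) \<Rightarrow> nat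
   \<Rightarrow> (nat \<Rightarrow> nat \<Rightarrow> 'a) \<Rightarrow> (nat \<Rightarrow> nat \<Rightarrow> 'a) \<Rightarrow> bool" where
  "prox_admm f phi rho eta n x lam \<longleftrightarrow>
     (\<forall>k. \<forall>i\<le>n. \<forall>z.
        aug_lagr f phi rho n (\<lambda>j. if j < i then x (Suc k) j else if j = i then x (Suc k) i else x k j) (lam k)
          + 1 / (2 * eta i) * (norm (x (Suc k) i - x k i))\<^sup>2
        \<le> aug_lagr f phi rho n (\<lambda>j. if j < i then x (Suc k) j else if j = i then z else x k j) (lam k)
          + 1 / (2 * eta i) * (norm (z - x k i))\<^sup>2) \<and>
     (\<forall>k. \<forall>j<n. lam (Suc k) j = lam k j + rho j *\<^sub>R (x (Suc k) (Suc j) - phi (x (Suc k) j)))"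

text \<open>Assumption (A2) on a set S of points (restricted to indices 0..n).
  Df i x is the gradient of f i at x, Dphi x the Jacobian of phi at x (norm = operator 2-norm).\<close>
definition assumption_A2 ::
  "nat \<Rightarrow> (nat \<Rightarrow> 'a::euclidean_space \<Rightarrow> 'a) \<Rightarrow> ('a \<Rightarrow> 'a) \<Rightarrow> ('a \<Rightarrow> 'a \<Rightarrow>\<^sub>L 'a)
   \<Rightarrow> (nat \<Rightarrow> 'a) set \<Rightarrow> real \<Rightarrow> real \<Rightarrow> real \<Rightarrow> real \<Rightarrow> real \<Rightarrow> bool" where
  "assumption_A2 n Df phi Dphi S Mf Lf Cphi Mphi Lphi \<longleftrightarrow>
     Mf > 0 \<and> Lf > 0 \<and> Cphi > 0 \<and> Mphi > 0 \<and> Lphi > 0 \<and>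
     (\<forall>x\<in>S. \<forall>y\<in>S. \<forall>i\<le>n.
        norm (Df i (x i)) \<le> Mf \<and>
        norm (Df i (x i) - Df i (y i)) \<le> Lf * norm (x i - y i) \<and>
        norm (phi (x i)) \<le> Cphi \<and>
        norm (Dphi (x i)) \<le> Mphi \<and>
        norm (Dphi (x i) - Dphi (y i)) \<le> Lphi * norm (x i - y i))"

text \<open>(M^a - M^b)/(1 - M) read as sum_{l=a}^{b-1} M^l.\<close>
definition geo_quot :: "real \<Rightarrow> nat \<Rightarrow> nat \<Rightarrow> real" where
  "geo_quot M a b = (\<Sum>l=a..<b. M ^ l)"

definition C_const ::
  "nat \<Rightarrow> real \<Rightarrow> real \<Rightarrow> real \<Rightarrow> real \<Rightarrow> (nat \<Rightarrow> real) \<Rightarrow> (nat \<Rightarrow> real) \<Rightarrow> nat \<Rightarrow> nat \<Rightarrow> real" where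
  "C_const n Mf Lf Mphi Lphi rho eta j i =
     (if j = i then geo_quot Mphi 0 (n - i - 1) * Mf * Lphi + Lf + 1 / eta (Suc i)
      else geo_quot Mphi (j - i) (n - i - 1) * Mf * Lphi + Mphi ^ (j - i) * Lf
        + (2 * real j - 2 * real i + 1) * Mphi ^ (j - i) / eta (Suc j)
        + (2 * real j - 2 * real i - 1) * rho j * Mphi ^ (j - i))"

definition Ct_const ::
  "real \<Rightarrow> (nat \<Rightarrow> real) \<Rightarrow> (nat \<Rightarrow> real) \<Rightarrow> nat \<Rightarrow> nat \<Rightarrow> real" where
  "Ct_const Mphi rho eta j i =
     (if j = i then 1 / eta (Suc i)
      else Mphi ^ (j - i) / eta (Suc j) + rho j * Mphi ^ (j - i))"

end

theory Submission
  imports Defs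
begin

(* The optimality condition of the x_(j+1)-block update, combined with the multiplier update,
   expresses lambda_j^(k+1) through grad f_(j+1), the proximal step and Dphi(x_(j+1))^T lambda_(j+1)^(k+1):
   a backward recursion in j that ends at j = n - 1.  Subtracting the recursions at iterations k + 1
   and k and unrolling them from n - 1 down to i bounds |lambda_i^(k+1) - lambda_i^k| by
   sum_j (C_(j,i) |x_(j+1)^(k+1) - x_(j+1)^k| + C~_(j,i) |x_(j+1)^k - x_(j+1)^(k-1)|);
   Cauchy-Schwarz over these n - i terms gives the squared bound. *)

lemma linear_blinfun_apply: "linear (blinfun_apply A)"
  by (rule bounded_linear.linear[OF blinfun.bounded_linear_right])

lemma norm_adjoint_blinfun_le:
  fixes A :: "'a::euclidean_space \<Rightarrow>\<^sub>L 'b::euclidean_space"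
  shows "norm (adjoint (blinfun_apply A) v) \<le> norm A * norm v"
proof -
  let ?w = "adjoint (blinfun_apply A) v"
  have "norm ?w * norm ?w = inner ?w ?w"
    by (simp add: power2_norm_eq_inner[symmetric] power2_eq_square)
  also have "\<dots> = inner (A ?w) v"
    by (rule adjoint_clauses(1)[OF linear_blinfun_apply])
  also have "\<dots> \<le> norm (A ?w) * norm v"
    by (rule norm_cauchy_schwarz)
  also have "\<dots> \<le> norm A * norm ?w * norm v"
    by (intro mult_right_mono norm_blinfun) simp
  also have "\<dots> = norm A * norm v * norm ?w"
    by (simp add: mult_ac)
  finally show ?thesis
    by (cases "norm ?w = 0") (simp_all add: mult_le_cancel_right)
qed

lemma adjoint_blinfun_diff:
  fixes A B :: "'a::euclidean_space \<Rightarrow>\<^sub>L 'b::euclidean_space"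
  shows "adjoint (blinfun_apply A) v - adjoint (blinfun_apply B) v = adjoint (blinfun_apply (A - B)) v"
proof -
  have "inner h (adjoint (blinfun_apply A) v - adjoint (blinfun_apply B) v)
      = inner h (adjoint (blinfun_apply (A - B)) v)" for h
    by (simp add: inner_diff_right adjoint_clauses(1)[OF linear_blinfun_apply] blinfun.diff_left inner_diff_left)
  then show ?thesis
    using vector_eq_ldot by blast
qed

lemma norm_adjoint_diff_le:
  fixes A1 A0 :: "'a::euclidean_space \<Rightarrow>\<^sub>L 'b::euclidean_space"
  assumes "L = G + R"
  shows "norm (adjoint (blinfun_apply A1) L - adjoint (blinfun_apply A0) L')
    \<le> norm (A1 - A0) * norm G + (norm A1 + norm A0) * norm R + norm A0 * norm (L - L')"
proof -
  let ?adj = "\<lambda>A. adjoint (blinfun_apply A)"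
  have lin: "linear (?adj A)" for A :: "'a \<Rightarrow>\<^sub>L 'b"
    by (rule adjoint_linear[OF linear_blinfun_apply])
  have "?adj A1 L - ?adj A0 L' = ?adj (A1 - A0) G + ?adj (A1 - A0) R + ?adj A0 (L - L')"
    unfolding assms adjoint_blinfun_diff[symmetric] linear_add[OF lin] linear_diff[OF lin]
    by (simp add: algebra_simps)
  also have "norm \<dots> \<le> norm (A1 - A0) * norm G + norm (A1 - A0) * norm R + norm A0 * norm (L - L')"
    by (intro norm_triangle_le add_mono norm_adjoint_blinfun_le)
  also have "norm (A1 - A0) * norm R \<le> (norm A1 + norm A0) * norm R"
    by (intro mult_right_mono norm_triangle_ineq4) simp
  finally show ?thesis by simp
qed

lemma geo_quot_Suc_Suc: "geo_quot M (Suc a) (Suc b) = M * geo_quot M a b"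
  unfolding geo_quot_def sum.shift_bounds_Suc_ivl by (simp add: sum_distrib_left)

lemma geo_quot_0_Suc: "geo_quot M 0 (Suc b) = 1 + M * geo_quot M 0 b"
proof -
  have "geo_quot M 0 (Suc b) = 1 + geo_quot M (Suc 0) (Suc b)"
    unfolding geo_quot_def by (simp add: sum.atLeast_Suc_lessThan)
  then show ?thesis by (simp add: geo_quot_Suc_Suc)
qed

lemma square_sum_le_card_sum_squares:
  fixes u v :: "'a \<Rightarrow> real"
  shows "(\<Sum>j\<in>I. u j + v j)\<^sup>2 \<le> 2 * real (card I) * (\<Sum>j\<in>I. (u j)\<^sup>2 + (v j)\<^sup>2)"
proof -
  have "(\<Sum>j\<in>I. u j + v j)\<^sup>2 \<le> (\<Sum>j\<in>I. (u j + v j)\<^sup>2) * card I"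
    by (rule sum_squared_le_sum_of_squares)
  also have "\<dots> \<le> (\<Sum>j\<in>I. 2 * ((u j)\<^sup>2 + (v j)\<^sup>2)) * card I"
  proof (intro mult_right_mono sum_mono)
    show "(u j + v j)\<^sup>2 \<le> 2 * ((u j)\<^sup>2 + (v j)\<^sup>2)" for j
      using zero_le_power2[of "u j - v j"] by (simp add: power2_eq_square algebra_simps)
  qed simp
  finally show ?thesis by (simp add: sum_distrib_left mult_ac)
qed

lemma C_const_step:
  assumes J: "Suc i \<le> J" "J < n" and eta: "eta (Suc J) \<noteq> 0"
  shows "C_const n Mf Lf M Lp rho eta J i * a + Ct_const M rho eta J i * b
    = M * (C_const n Mf Lf M Lp rho eta J (Suc i) * a + Ct_const M rho eta J (Suc i) * b)
      + 2 * M * (M ^ (J - Suc i) * (a / eta (Suc J) + (if Suc i < J then rho J * a else 0)))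
      + (if J = Suc i then rho J * M * (a + b) else 0)"
proof -
  have shift: "J - i = Suc (J - Suc i)" "n - i - 1 = Suc (n - Suc i - 1)"
    using J by auto
  then have "geo_quot M (J - i) (n - i - 1) = M * geo_quot M (J - Suc i) (n - Suc i - 1)"
    by (simp add: geo_quot_Suc_Suc)
  with shift J show ?thesis
    by (cases "J = Suc i") (simp_all add: C_const_def Ct_const_def field_simps eta)
qed

lemma aug_lagr_block_has_derivative:
  fixes f :: "nat \<Rightarrow> 'a::euclidean_space \<Rightarrow> real"
  assumes i: "1 \<le> i" "i \<le> n"
    and f_deriv: "(f i has_derivative inner g) (at z)"
    and phi_deriv: "(phi has_derivative blinfun_apply D) (at z)"
  shows "((\<lambda>w. aug_lagr f phi rho n (y(i := w)) lam) has_derivative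
      inner (g + lam (i - 1) + rho (i - 1) *\<^sub>R (z - phi (y (i - 1)))
        - (if i < n then adjoint (blinfun_apply D) (lam i + rho i *\<^sub>R (y (Suc i) - phi z)) else 0)))
    (at z)"
proof -
  define c where "c j w = inner (lam j) (w (Suc j) - phi (w j))
      + rho j / 2 * inner (w (Suc j) - phi (w j)) (w (Suc j) - phi (w j))" for j w
  have aug: "aug_lagr f phi rho n w lam = (\<Sum>j\<le>n. f j (w j)) + (\<Sum>j<n. c j w)" for w
    unfolding aug_lagr_def c_def by (simp add: power2_norm_eq_inner)
  have df: "((\<lambda>w. f j ((y(i := w)) j)) has_derivative (\<lambda>h. if j = i then inner g h else 0)) (at z)" for j
    using f_deriv by (cases "j = i") simp_all
  have dc: "((\<lambda>w. c j (y(i := w))) has_derivative (\<lambda>h.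
        (if j = i then - inner (lam i + rho i *\<^sub>R (y (Suc i) - phi z)) (D h) else 0)
      + (if j = i - 1 then inner (lam (i - 1) + rho (i - 1) *\<^sub>R (z - phi (y (i - 1)))) h else 0))) (at z)" for j
  proof -
    consider "j = i" | "j = i - 1" | "j \<noteq> i" "j \<noteq> i - 1" by blast
    then show ?thesis
    proof cases
      case 1
      then have "j \<noteq> i - 1" using i by auto
      with 1 show ?thesis unfolding c_def
        by (auto intro!: derivative_eq_intros phi_deriv simp: algebra_simps inner_commute)
    next
      case 2
      then have "Suc j = i" "j \<noteq> i" using i by auto
      then show ?thesis unfolding c_def
        by (auto intro!: derivative_eq_intros simp: algebra_simps inner_commute)
    next
      case 3
      then have "Suc j \<noteq> i" using i by auto
      with 3 show ?thesis unfolding c_def by simp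
    qed
  qed
  have adj: "inner (adjoint (blinfun_apply D) v) h = inner v (D h)" for v h
    by (simp add: adjoint_clauses(2)[OF linear_blinfun_apply])
  have "((\<lambda>w. aug_lagr f phi rho n (y(i := w)) lam) has_derivative (\<lambda>h.
        (\<Sum>j\<le>n. if j = i then inner g h else 0)
      + ((\<Sum>j<n. if j = i then - inner (lam i + rho i *\<^sub>R (y (Suc i) - phi z)) (D h) else 0)
      + (\<Sum>j<n. if j = i - 1 then inner (lam (i - 1) + rho (i - 1) *\<^sub>R (z - phi (y (i - 1)))) h else 0))))
    (at z)"
    unfolding aug sum.distrib[symmetric]
    by (intro has_derivative_add has_derivative_sum df dc)
  then show ?thesis
    by (rule has_derivative_eq_rhs[OF _ ext]) (use i adj in \<open>auto simp: inner_diff_left inner_add_left\<close>)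
qed

lemma prox_admm_block_stationary:
  fixes f :: "nat \<Rightarrow> 'a::euclidean_space \<Rightarrow> real"
  assumes admm: "prox_admm f phi rho eta n x lam"
    and f_deriv: "(f i has_derivative inner (Df i (x (Suc m) i))) (at (x (Suc m) i))"
    and phi_deriv: "(phi has_derivative blinfun_apply (Dphi (x (Suc m) i))) (at (x (Suc m) i))"
    and i: "1 \<le> i" "i \<le> n" and eta: "eta i \<noteq> 0"
  shows "Df i (x (Suc m) i) + lam m (i - 1) + rho (i - 1) *\<^sub>R (x (Suc m) i - phi (x (Suc m) (i - 1)))
      - (if i < n then adjoint (blinfun_apply (Dphi (x (Suc m) i)))
          (lam m i + rho i *\<^sub>R (x m (Suc i) - phi (x (Suc m) i))) else 0)
      + (1 / eta i) *\<^sub>R (x (Suc m) i - x m i) = 0"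
    (is "?v = 0")
proof -
  define y where "y j = (if j < i then x (Suc m) j else x m j)" for j
  define F where "F w = aug_lagr f phi rho n (y(i := w)) (lam m)
      + 1 / (2 * eta i) * inner (w - x m i) (w - x m i)" for w
  have block: "(\<lambda>j. if j < i then x (Suc m) j else if j = i then w else x m j) = y(i := w)" for w
    by (auto simp: y_def)
  have "F (x (Suc m) i) \<le> F w" for w
    using admm[unfolded prox_admm_def, THEN conjunct1, rule_format, of i m w] i
    by (simp add: F_def block power2_norm_eq_inner)
  moreover have "(F has_derivative inner ?v) (at (x (Suc m) i))"
  proof -
    have prox: "((\<lambda>w. 1 / (2 * eta i) * inner (w - x m i) (w - x m i)) has_derivative
        inner ((1 / eta i) *\<^sub>R (x (Suc m) i - x m i))) (at (x (Suc m) i))"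
      by (auto intro!: derivative_eq_intros ext simp: inner_commute inner_diff_right eta field_simps)
    show ?thesis
      unfolding F_def
      by (rule has_derivative_eq_rhs[OF has_derivative_add[OF
            aug_lagr_block_has_derivative[where f = f, OF i f_deriv phi_deriv] prox] ext])
        (use i in \<open>simp add: y_def inner_add_left inner_diff_left\<close>)
  qed
  ultimately have "inner ?v = (\<lambda>h. 0)"
    by (intro differential_zero_maxmin[of _ UNIV]) auto
  then have "inner ?v ?v = 0" by metis
  then show ?thesis by simp
qed

definition multiplier_recursion ::
  "nat \<Rightarrow> (nat \<Rightarrow> real) \<Rightarrow> (nat \<Rightarrow> real) \<Rightarrow> (nat \<Rightarrow> 'a::euclidean_space) \<Rightarrow> (nat \<Rightarrow> 'a \<Rightarrow>\<^sub>L 'a)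
    \<Rightarrow> (nat \<Rightarrow> 'a) \<Rightarrow> (nat \<Rightarrow> 'a) \<Rightarrow> bool" where
  "multiplier_recursion n eta rho g A d L \<longleftrightarrow>
     (\<forall>j<n. L j = - g (Suc j) - (1 / eta (Suc j)) *\<^sub>R d (Suc j)
        + (if Suc j < n then adjoint (blinfun_apply (A (Suc j))) (L (Suc j) - rho (Suc j) *\<^sub>R d (Suc (Suc j)))
           else 0))"

lemma prox_admm_multiplier_recursion:
  fixes f :: "nat \<Rightarrow> 'a::euclidean_space \<Rightarrow> real"
  assumes admm: "prox_admm f phi rho eta n x lam"
    and f_deriv: "\<And>i y. i \<le> n \<Longrightarrow> (f i has_derivative inner (Df i y)) (at y)"
    and phi_deriv: "\<And>y. (phi has_derivative blinfun_apply (Dphi y)) (at y)"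
    and eta_pos: "\<And>i. i \<le> n \<Longrightarrow> 0 < eta i"
  shows "multiplier_recursion n eta rho (\<lambda>j. Df j (x (Suc m) j)) (\<lambda>j. Dphi (x (Suc m) j))
    (\<lambda>j. x (Suc m) j - x m j) (lam (Suc m))"
  unfolding multiplier_recursion_def
proof (intro allI impI)
  fix j assume j: "j < n"
  have update: "lam (Suc m) l = lam m l + rho l *\<^sub>R (x (Suc m) (Suc l) - phi (x (Suc m) l))" if "l < n" for l
    using admm that unfolding prox_admm_def by blast
  have i: "1 \<le> Suc j" "Suc j \<le> n" "eta (Suc j) \<noteq> 0" using j eta_pos[of "Suc j"] by auto
  have arg: "lam m (Suc j) + rho (Suc j) *\<^sub>R (x m (Suc (Suc j)) - phi (x (Suc m) (Suc j)))
      = lam (Suc m) (Suc j) - rho (Suc j) *\<^sub>R (x (Suc m) (Suc (Suc j)) - x m (Suc (Suc j)))"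
    if "Suc j < n"
    using that by (simp add: update algebra_simps)
  define a where "a = (if Suc j < n then adjoint (blinfun_apply (Dphi (x (Suc m) (Suc j))))
      (lam (Suc m) (Suc j) - rho (Suc j) *\<^sub>R (x (Suc m) (Suc (Suc j)) - x m (Suc (Suc j)))) else 0)"
  from prox_admm_block_stationary[where Df = Df and Dphi = Dphi and m = m,
      OF admm f_deriv[OF i(2)] phi_deriv i]
  have "Df (Suc j) (x (Suc m) (Suc j)) + lam (Suc m) j - a
      + (1 / eta (Suc j)) *\<^sub>R (x (Suc m) (Suc j) - x m (Suc j)) = 0"
    unfolding a_def update[OF j] by (cases "Suc j < n") (simp_all add: arg add.assoc)
  then show "lam (Suc m) j = - Df (Suc j) (x (Suc m) (Suc j))
      - (1 / eta (Suc j)) *\<^sub>R (x (Suc m) (Suc j) - x m (Suc j)) + a"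
    by (simp add: algebra_simps eq_neg_iff_add_eq_0)
qed

(* L1, L0 are the multipliers lambda^(k+1), lambda^k of two consecutive iterations and d1, d0 the
   primal steps x^(k+1) - x^k, x^k - x^(k-1); g1, A1 and g0, A0 are gradients and Jacobians at the
   corresponding iterates. *)
locale multiplier_difference =
  fixes n :: nat and eta rho :: "nat \<Rightarrow> real" and Mf Lf Mphi Lphi :: real
    and g1 g0 :: "nat \<Rightarrow> 'a::euclidean_space" and A1 A0 :: "nat \<Rightarrow> 'a \<Rightarrow>\<^sub>L 'a"
    and d1 d0 L1 L0 :: "nat \<Rightarrow> 'a"
  assumes rec1: "multiplier_recursion n eta rho g1 A1 d1 L1"
    and rec0: "multiplier_recursion n eta rho g0 A0 d0 L0"
    and eta_pos: "\<And>j. j \<le> n \<Longrightarrow> 0 < eta j"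
    and rho_pos: "\<And>j. j < n \<Longrightarrow> 0 < rho j"
    and grad_bound: "\<And>j. j \<le> n \<Longrightarrow> norm (g1 j) \<le> Mf"
    and grad_lipschitz: "\<And>j. j \<le> n \<Longrightarrow> norm (g1 j - g0 j) \<le> Lf * norm (d1 j)"
    and jac_bound: "\<And>j. j \<le> n \<Longrightarrow> norm (A1 j) \<le> Mphi" "\<And>j. j \<le> n \<Longrightarrow> norm (A0 j) \<le> Mphi"
    and jac_lipschitz: "\<And>j. j \<le> n \<Longrightarrow> norm (A1 j - A0 j) \<le> Lphi * norm (d1 j)"
begin

lemma Mphi_nonneg: "0 \<le> Mphi"
  using jac_bound(1)[of 0] norm_ge_zero order_trans by blast

lemma eta_Suc_pos: "j < n \<Longrightarrow> 0 < eta (Suc j)"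
  by (simp add: eta_pos)

lemma L1_eq: "j < n \<Longrightarrow> L1 j = - g1 (Suc j) - (1 / eta (Suc j)) *\<^sub>R d1 (Suc j)
    + (if Suc j < n then adjoint (blinfun_apply (A1 (Suc j))) (L1 (Suc j) - rho (Suc j) *\<^sub>R d1 (Suc (Suc j)))
       else 0)"
  using rec1 unfolding multiplier_recursion_def by blast

lemma L0_eq: "j < n \<Longrightarrow> L0 j = - g0 (Suc j) - (1 / eta (Suc j)) *\<^sub>R d0 (Suc j)
    + (if Suc j < n then adjoint (blinfun_apply (A0 (Suc j))) (L0 (Suc j) - rho (Suc j) *\<^sub>R d0 (Suc (Suc j)))
       else 0)"
  using rec0 unfolding multiplier_recursion_def by blast

definition prox_bound :: "nat \<Rightarrow> real" where
  "prox_bound i = (\<Sum>J=i..<n. Mphi ^ (J - i)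
      * (norm (d1 (Suc J)) / eta (Suc J) + (if i < J then rho J * norm (d1 (Suc J)) else 0)))"

lemma prox_bound_last:
  assumes "1 \<le> n"
  shows "prox_bound (n - 1) = norm (d1 n) / eta n"
proof -
  have "{n - 1..<n} = {n - 1}" using assms by auto
  then show ?thesis using assms by (simp add: prox_bound_def)
qed

lemma prox_bound_step:
  assumes "Suc i < n"
  shows "prox_bound i = norm (d1 (Suc i)) / eta (Suc i)
    + Mphi * (rho (Suc i) * norm (d1 (Suc (Suc i))) + prox_bound (Suc i))"
proof -
  have "prox_bound i = norm (d1 (Suc i)) / eta (Suc i) + (\<Sum>J=Suc i..<n. Mphi ^ (J - i)
      * (norm (d1 (Suc J)) / eta (Suc J) + rho J * norm (d1 (Suc J))))"
    unfolding prox_bound_def using assms by (simp add: sum.atLeast_Suc_lessThan)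
  also have "(\<Sum>J=Suc i..<n. Mphi ^ (J - i) * (norm (d1 (Suc J)) / eta (Suc J) + rho J * norm (d1 (Suc J))))
    = (\<Sum>J=Suc i..<n. (if J = Suc i then Mphi * (rho J * norm (d1 (Suc J))) else 0)
      + Mphi * (Mphi ^ (J - Suc i)
        * (norm (d1 (Suc J)) / eta (Suc J) + (if Suc i < J then rho J * norm (d1 (Suc J)) else 0))))"
  proof (rule sum.cong)
    fix J assume "J \<in> {Suc i..<n}"
    then have "J - i = Suc (J - Suc i)" "Suc i \<le> J" by auto
    then show "Mphi ^ (J - i) * (norm (d1 (Suc J)) / eta (Suc J) + rho J * norm (d1 (Suc J)))
      = (if J = Suc i then Mphi * (rho J * norm (d1 (Suc J))) else 0)
      + Mphi * (Mphi ^ (J - Suc i)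
        * (norm (d1 (Suc J)) / eta (Suc J) + (if Suc i < J then rho J * norm (d1 (Suc J)) else 0)))"
      by (auto simp: algebra_simps)
  qed simp
  also have "\<dots> = Mphi * (rho (Suc i) * norm (d1 (Suc (Suc i)))) + Mphi * prox_bound (Suc i)"
    using assms by (simp add: prox_bound_def sum.distrib sum_distrib_left)
  finally show ?thesis
    by (simp add: distrib_left)
qed

lemma multiplier_split_step:
  assumes t: "Suc t < n"
    and GR: "L1 (Suc t) = G + R" "norm G \<le> Mf * geo_quot Mphi 0 (n - Suc t)" "norm R \<le> prox_bound (Suc t)"
  shows "\<exists>G' R'. L1 t = G' + R' \<and> norm G' \<le> Mf * geo_quot Mphi 0 (n - t) \<and> norm R' \<le> prox_bound t"
proof -
  let ?A = "adjoint (blinfun_apply (A1 (Suc t)))"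
  have lin: "linear ?A" by (rule adjoint_linear[OF linear_blinfun_apply])
  have A1: "norm (A1 (Suc t)) \<le> Mphi" using jac_bound(1)[of "Suc t"] t by simp
  have "L1 t = (- g1 (Suc t) + ?A G)
      + (- (1 / eta (Suc t)) *\<^sub>R d1 (Suc t) + ?A (R - rho (Suc t) *\<^sub>R d1 (Suc (Suc t))))"
    using L1_eq[of t] t unfolding GR(1) by (simp add: linear_add[OF lin] linear_diff[OF lin] algebra_simps)
  moreover have "norm (- g1 (Suc t) + ?A G) \<le> Mf * geo_quot Mphi 0 (n - t)"
  proof -
    have "norm (- g1 (Suc t) + ?A G) \<le> Mf + Mphi * (Mf * geo_quot Mphi 0 (n - Suc t))"
      using grad_bound[of "Suc t"] t norm_adjoint_blinfun_le[of "A1 (Suc t)" G] A1 GR(2)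
        mult_mono[OF A1 GR(2)] Mphi_nonneg norm_triangle_ineq[of "- g1 (Suc t)" "?A G"]
      by simp
    moreover have "n - t = Suc (n - Suc t)" using t by simp
    ultimately show ?thesis by (simp add: geo_quot_0_Suc algebra_simps)
  qed
  moreover have "norm (- (1 / eta (Suc t)) *\<^sub>R d1 (Suc t) + ?A (R - rho (Suc t) *\<^sub>R d1 (Suc (Suc t))))
      \<le> prox_bound t"
  proof -
    have "norm (R - rho (Suc t) *\<^sub>R d1 (Suc (Suc t))) \<le> rho (Suc t) * norm (d1 (Suc (Suc t))) + prox_bound (Suc t)"
      using norm_triangle_ineq4[of R "rho (Suc t) *\<^sub>R d1 (Suc (Suc t))"] GR(3) rho_pos[of "Suc t"] t
      by simp
    then have "norm (?A (R - rho (Suc t) *\<^sub>R d1 (Suc (Suc t))))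
        \<le> Mphi * (rho (Suc t) * norm (d1 (Suc (Suc t))) + prox_bound (Suc t))"
      using norm_adjoint_blinfun_le[of "A1 (Suc t)"] mult_mono[OF A1] Mphi_nonneg
      by (meson norm_ge_zero order_trans)
    moreover have "norm (- (1 / eta (Suc t)) *\<^sub>R d1 (Suc t)) = norm (d1 (Suc t)) / eta (Suc t)"
      using eta_Suc_pos[of t] t by simp
    ultimately show ?thesis
      using norm_triangle_ineq[of "- (1 / eta (Suc t)) *\<^sub>R d1 (Suc t)" "?A (R - rho (Suc t) *\<^sub>R d1 (Suc (Suc t)))"]
        prox_bound_step[OF t]
      by linarith
  qed
  ultimately show ?thesis by blast
qed

(* Only the gradient part G is later paired with the Lipschitz constant of Dphi; the rest R is
   controlled through norm (A1 - A0) <= 2 Mphi, which produces the two kinds of terms in C_(j,i). *)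
lemma multiplier_split:
  assumes "i < n"
  shows "\<exists>G R. L1 i = G + R \<and> norm G \<le> Mf * geo_quot Mphi 0 (n - i) \<and> norm R \<le> prox_bound i"
proof -
  have "i \<le> n - 1" using assms by simp
  then show ?thesis
  proof (induction i rule: inc_induct)
    case base
    have n: "1 \<le> n" "Suc (n - 1) = n" using assms by auto
    have "L1 (n - 1) = - g1 n + - (1 / eta n) *\<^sub>R d1 n"
      using L1_eq[of "n - 1"] n by simp
    moreover have "norm (- (1 / eta n) *\<^sub>R d1 n) = norm (d1 n) / eta n"
      using eta_pos[of n] by simp
    moreover have "geo_quot Mphi 0 (n - (n - 1)) = 1"
      using n by (simp add: geo_quot_def)
    ultimately show ?case
      using grad_bound[of n] prox_bound_last[OF n(1)] by fastforce
  next
    case (step t)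
    then have "Suc t < n" by simp
    with step.IH show ?case
      using multiplier_split_step by blast
  qed
qed

definition diff_bound :: "nat \<Rightarrow> real" where
  "diff_bound i = (\<Sum>J=i..<n. C_const n Mf Lf Mphi Lphi rho eta J i * norm (d1 (Suc J))
      + Ct_const Mphi rho eta J i * norm (d0 (Suc J)))"

lemma diff_bound_last:
  assumes "1 \<le> n"
  shows "diff_bound (n - 1) = (Lf + 1 / eta n) * norm (d1 n) + norm (d0 n) / eta n"
proof -
  have "{n - 1..<n} = {n - 1}" using assms by auto
  then show ?thesis using assms by (simp add: diff_bound_def C_const_def Ct_const_def geo_quot_def)
qed

lemma diff_bound_step:
  assumes i: "Suc i < n"
  shows "diff_bound i = (geo_quot Mphi 0 (n - Suc i) * Mf * Lphi + Lf + 1 / eta (Suc i)) * norm (d1 (Suc i))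
      + norm (d0 (Suc i)) / eta (Suc i) + Mphi * diff_bound (Suc i) + 2 * Mphi * prox_bound (Suc i)
      + rho (Suc i) * Mphi * (norm (d1 (Suc (Suc i))) + norm (d0 (Suc (Suc i))))"
proof -
  let ?a = "\<lambda>J. norm (d1 (Suc J))" and ?b = "\<lambda>J. norm (d0 (Suc J))"
  have "diff_bound i = (C_const n Mf Lf Mphi Lphi rho eta i i * ?a i + Ct_const Mphi rho eta i i * ?b i)
      + (\<Sum>J=Suc i..<n. C_const n Mf Lf Mphi Lphi rho eta J i * ?a J + Ct_const Mphi rho eta J i * ?b J)"
    unfolding diff_bound_def using i by (simp add: sum.atLeast_Suc_lessThan)
  also have "(\<Sum>J=Suc i..<n. C_const n Mf Lf Mphi Lphi rho eta J i * ?a J + Ct_const Mphi rho eta J i * ?b J)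
    = (\<Sum>J=Suc i..<n. Mphi * (C_const n Mf Lf Mphi Lphi rho eta J (Suc i) * ?a J
          + Ct_const Mphi rho eta J (Suc i) * ?b J)
        + 2 * Mphi * (Mphi ^ (J - Suc i) * (?a J / eta (Suc J) + (if Suc i < J then rho J * ?a J else 0)))
        + (if J = Suc i then rho J * Mphi * (?a J + ?b J) else 0))"
    using eta_Suc_pos by (intro sum.cong refl C_const_step) force+
  also have "\<dots> = Mphi * diff_bound (Suc i) + 2 * Mphi * prox_bound (Suc i)
      + rho (Suc i) * Mphi * (?a (Suc i) + ?b (Suc i))"
    unfolding diff_bound_def prox_bound_def using i by (simp add: sum.distrib sum_distrib_left distrib_left)
  finally show ?thesis by (simp add: C_const_def Ct_const_def algebra_simps)
qed

lemma multiplier_diff_eq: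
  assumes t: "Suc t < n"
  shows "L1 t - L0 t = - (g1 (Suc t) - g0 (Suc t)) - (1 / eta (Suc t)) *\<^sub>R (d1 (Suc t) - d0 (Suc t))
    + (adjoint (blinfun_apply (A1 (Suc t))) (L1 (Suc t)) - adjoint (blinfun_apply (A0 (Suc t))) (L0 (Suc t)))
    - rho (Suc t) *\<^sub>R adjoint (blinfun_apply (A1 (Suc t))) (d1 (Suc (Suc t)))
    + rho (Suc t) *\<^sub>R adjoint (blinfun_apply (A0 (Suc t))) (d0 (Suc (Suc t)))"
proof -
  have lin: "linear (adjoint (blinfun_apply A))" for A :: "'a \<Rightarrow>\<^sub>L 'a"
    by (rule adjoint_linear[OF linear_blinfun_apply])
  have e1: "L1 t = - g1 (Suc t) - (1 / eta (Suc t)) *\<^sub>R d1 (Suc t) + adjoint (blinfun_apply (A1 (Suc t))) (L1 (Suc t))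
      - rho (Suc t) *\<^sub>R adjoint (blinfun_apply (A1 (Suc t))) (d1 (Suc (Suc t)))"
    using L1_eq[of t] t by (simp add: linear_diff[OF lin] linear_scale[OF lin])
  have e0: "L0 t = - g0 (Suc t) - (1 / eta (Suc t)) *\<^sub>R d0 (Suc t) + adjoint (blinfun_apply (A0 (Suc t))) (L0 (Suc t))
      - rho (Suc t) *\<^sub>R adjoint (blinfun_apply (A0 (Suc t))) (d0 (Suc (Suc t)))"
    using L0_eq[of t] t by (simp add: linear_diff[OF lin] linear_scale[OF lin])
  show ?thesis
    unfolding e1 e0 by (simp add: algebra_simps)
qed

lemma multiplier_diff_last_le:
  assumes "1 \<le> n"
  shows "norm (L1 (n - 1) - L0 (n - 1)) \<le> diff_bound (n - 1)"
proof -
  have e1: "L1 (n - 1) = - g1 n - (1 / eta n) *\<^sub>R d1 n"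
    and e0: "L0 (n - 1) = - g0 n - (1 / eta n) *\<^sub>R d0 n"
    using L1_eq[of "n - 1"] L0_eq[of "n - 1"] assms by simp_all
  have "L1 (n - 1) - L0 (n - 1) = - (g1 n - g0 n) - (1 / eta n) *\<^sub>R (d1 n - d0 n)"
    unfolding e1 e0 by (simp add: algebra_simps)
  also have "norm \<dots> \<le> Lf * norm (d1 n) + (1 / eta n) * (norm (d1 n) + norm (d0 n))"
    using grad_lipschitz[of n] eta_pos[of n] norm_triangle_ineq4[of "d1 n" "d0 n"]
    by (intro norm_triangle_le_diff add_mono) (auto simp: divide_right_mono norm_minus_commute)
  finally show ?thesis
    using diff_bound_last[OF assms] by (simp add: algebra_simps add_divide_distrib)
qed

lemma adjoint_multiplier_diff_le:
  assumes t: "Suc t < n"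
  shows "norm (adjoint (blinfun_apply (A1 (Suc t))) (L1 (Suc t)) - adjoint (blinfun_apply (A0 (Suc t))) (L0 (Suc t)))
    \<le> Lphi * norm (d1 (Suc t)) * (Mf * geo_quot Mphi 0 (n - Suc t)) + 2 * Mphi * prox_bound (Suc t)
      + Mphi * norm (L1 (Suc t) - L0 (Suc t))"
proof -
  obtain G R where GR: "L1 (Suc t) = G + R"
    "norm G \<le> Mf * geo_quot Mphi 0 (n - Suc t)" "norm R \<le> prox_bound (Suc t)"
    using multiplier_split[of "Suc t"] t by blast
  have J: "norm (A1 (Suc t)) \<le> Mphi" "norm (A0 (Suc t)) \<le> Mphi"
      "norm (A1 (Suc t) - A0 (Suc t)) \<le> Lphi * norm (d1 (Suc t))"
    using jac_bound[of "Suc t"] jac_lipschitz[of "Suc t"] t by auto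
  have "0 \<le> Lphi * norm (d1 (Suc t))" "0 \<le> Mphi + Mphi"
    using J(3) norm_ge_zero order_trans Mphi_nonneg by (blast, simp)
  then show ?thesis
    using norm_adjoint_diff_le[OF GR(1), of "A1 (Suc t)" "A0 (Suc t)" "L0 (Suc t)"]
      mult_mono[OF J(3) GR(2)] mult_mono[OF add_mono[OF J(1,2)] GR(3)]
      mult_right_mono[OF J(2) norm_ge_zero[of "L1 (Suc t) - L0 (Suc t)"]]
    by (simp add: algebra_simps)
qed

lemma multiplier_diff_step_le:
  assumes t: "Suc t < n"
  shows "norm (L1 t - L0 t) \<le> (geo_quot Mphi 0 (n - Suc t) * Mf * Lphi + Lf + 1 / eta (Suc t)) * norm (d1 (Suc t))
      + norm (d0 (Suc t)) / eta (Suc t) + Mphi * norm (L1 (Suc t) - L0 (Suc t)) + 2 * Mphi * prox_bound (Suc t)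
      + rho (Suc t) * Mphi * (norm (d1 (Suc (Suc t))) + norm (d0 (Suc (Suc t))))"
proof -
  let ?adj = "\<lambda>A. adjoint (blinfun_apply A)" and ?a = "\<lambda>j. norm (d1 j)" and ?b = "\<lambda>j. norm (d0 j)"
  have "norm (?adj (A1 (Suc t)) v) \<le> Mphi * norm v" "norm (?adj (A0 (Suc t)) v) \<le> Mphi * norm v" for v
    using jac_bound[of "Suc t"] t
      order_trans[OF norm_adjoint_blinfun_le mult_right_mono[OF _ norm_ge_zero]] by auto
  then have "norm (rho (Suc t) *\<^sub>R ?adj (A1 (Suc t)) (d1 (Suc (Suc t)))) \<le> rho (Suc t) * (Mphi * ?a (Suc (Suc t)))"
    and "norm (rho (Suc t) *\<^sub>R ?adj (A0 (Suc t)) (d0 (Suc (Suc t)))) \<le> rho (Suc t) * (Mphi * ?b (Suc (Suc t)))"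
    using rho_pos[of "Suc t"] t by (auto intro!: mult_left_mono)
  moreover have "norm ((1 / eta (Suc t)) *\<^sub>R (d1 (Suc t) - d0 (Suc t))) \<le> (?a (Suc t) + ?b (Suc t)) / eta (Suc t)"
    using eta_Suc_pos[of t] t norm_triangle_ineq4[of "d1 (Suc t)" "d0 (Suc t)"] by (simp add: divide_right_mono)
  moreover have "norm (g1 (Suc t) - g0 (Suc t)) \<le> Lf * ?a (Suc t)"
    using grad_lipschitz[of "Suc t"] t by simp
  moreover have "norm (L1 t - L0 t) \<le> norm (g1 (Suc t) - g0 (Suc t))
      + norm ((1 / eta (Suc t)) *\<^sub>R (d1 (Suc t) - d0 (Suc t)))
      + norm (?adj (A1 (Suc t)) (L1 (Suc t)) - ?adj (A0 (Suc t)) (L0 (Suc t)))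
      + norm (rho (Suc t) *\<^sub>R ?adj (A1 (Suc t)) (d1 (Suc (Suc t))))
      + norm (rho (Suc t) *\<^sub>R ?adj (A0 (Suc t)) (d0 (Suc (Suc t))))"
  proof -
    have "norm (- a - b + c - d + e) \<le> norm a + norm b + norm c + norm d + norm e" for a b c d e :: 'a
      by norm
    then show ?thesis unfolding multiplier_diff_eq[OF t] .
  qed
  ultimately have "norm (L1 t - L0 t) \<le> Lf * ?a (Suc t) + (?a (Suc t) + ?b (Suc t)) / eta (Suc t)
      + (Lphi * ?a (Suc t) * (Mf * geo_quot Mphi 0 (n - Suc t)) + 2 * Mphi * prox_bound (Suc t)
        + Mphi * norm (L1 (Suc t) - L0 (Suc t)))
      + rho (Suc t) * (Mphi * ?a (Suc (Suc t))) + rho (Suc t) * (Mphi * ?b (Suc (Suc t)))"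
    using adjoint_multiplier_diff_le[OF t] by linarith
  then show ?thesis
    by (simp add: algebra_simps add_divide_distrib)
qed

lemma multiplier_diff_le:
  assumes "i < n"
  shows "norm (L1 i - L0 i) \<le> diff_bound i"
proof -
  have "i \<le> n - 1" using assms by simp
  then show ?thesis
  proof (induction i rule: inc_induct)
    case base
    show ?case using multiplier_diff_last_le assms by simp
  next
    case (step t)
    then have "Suc t < n" by simp
    then show ?case
      using multiplier_diff_step_le diff_bound_step mult_left_mono[OF step.IH Mphi_nonneg] by fastforce
  qed
qed

lemma multiplier_diff_sq_le:
  assumes "i < n"
  shows "(norm (L1 i - L0 i))\<^sup>2 \<le>
      (\<Sum>j=i..<n. 2 * real (n - i) * (C_const n Mf Lf Mphi Lphi rho eta j i)\<^sup>2 * (norm (d1 (Suc j)))\<^sup>2)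
    + (\<Sum>j=i..<n. 2 * real (n - i) * (Ct_const Mphi rho eta j i)\<^sup>2 * (norm (d0 (Suc j)))\<^sup>2)"
proof -
  have "(norm (L1 i - L0 i))\<^sup>2 \<le> (diff_bound i)\<^sup>2"
    using multiplier_diff_le[OF assms] by (simp add: power_mono)
  also have "\<dots> \<le> 2 * real (card {i..<n}) * (\<Sum>j=i..<n.
      (C_const n Mf Lf Mphi Lphi rho eta j i * norm (d1 (Suc j)))\<^sup>2
      + (Ct_const Mphi rho eta j i * norm (d0 (Suc j)))\<^sup>2)"
    unfolding diff_bound_def by (rule square_sum_le_card_sum_squares)
  also have "\<dots> = (\<Sum>j=i..<n. 2 * real (n - i) * (C_const n Mf Lf Mphi Lphi rho eta j i)\<^sup>2 * (norm (d1 (Suc j)))\<^sup>2)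
    + (\<Sum>j=i..<n. 2 * real (n - i) * (Ct_const Mphi rho eta j i)\<^sup>2 * (norm (d0 (Suc j)))\<^sup>2)"
    using assms by (simp add: of_nat_diff sum.distrib sum_distrib_left distrib_left power_mult_distrib mult_ac)
  finally show ?thesis .
qed

end

theorem lemma2:
  fixes n :: nat
    and f :: "nat \<Rightarrow> 'a::euclidean_space \<Rightarrow> real" and Df :: "nat \<Rightarrow> 'a \<Rightarrow> 'a"
    and phi :: "'a \<Rightarrow> 'a" and Dphi :: "'a \<Rightarrow> 'a \<Rightarrow>\<^sub>L 'a"
    and rho eta :: "nat \<Rightarrow> real"
    and x lam :: "nat \<Rightarrow> nat \<Rightarrow> 'a"
    and S :: "(nat \<Rightarrow> 'a) set"
    and Mf Lf Cphi Mphi Lphi :: real and k :: nat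
  assumes n_pos: "n \<ge> 1"
    and f_C1: "\<And>i y. i \<le> n \<Longrightarrow> (f i has_derivative (\<lambda>h. inner (Df i y) h)) (at y)"
    and Df_cont: "\<And>i. i \<le> n \<Longrightarrow> continuous_on UNIV (Df i)"
    and phi_C1: "\<And>y. (phi has_derivative blinfun_apply (Dphi y)) (at y)"
    and Dphi_cont: "continuous_on UNIV Dphi"
    and rho_pos: "\<And>i. i < n \<Longrightarrow> rho i > 0"
    and eta_pos: "\<And>i. i \<le> n \<Longrightarrow> eta i > 0"
    and admm: "prox_admm f phi rho eta n x lam"
    and S_compact: "compact S"
    and S_sub: "S \<subseteq> {..n} \<rightarrow>\<^sub>E UNIV"
    and A2: "assumption_A2 n Df phi Dphi S Mf Lf Cphi Mphi Lphi"
    and k_ge: "k \<ge> 1"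
    and xk_S: "restrict (x k) {..n} \<in> S"
    and xk1_S: "restrict (x (Suc k)) {..n} \<in> S"
  shows "\<forall>i<n. (norm (lam (Suc k) i - lam k i))\<^sup>2 \<le>
      (\<Sum>j=i..<n. 2 * real (n - i) * (C_const n Mf Lf Mphi Lphi rho eta j i)\<^sup>2
                   * (norm (x (Suc k) (Suc j) - x k (Suc j)))\<^sup>2)
    + (\<Sum>j=i..<n. 2 * real (n - i) * (Ct_const Mphi rho eta j i)\<^sup>2
                   * (norm (x k (Suc j) - x (k - 1) (Suc j)))\<^sup>2)"
proof -
  have recursion_new: "multiplier_recursion n eta rho (\<lambda>j. Df j (x (Suc k) j)) (\<lambda>j. Dphi (x (Suc k) j))
      (\<lambda>j. x (Suc k) j - x k j) (lam (Suc k))"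
    by (rule prox_admm_multiplier_recursion[OF admm f_C1 phi_C1 eta_pos])
  have recursion_old: "multiplier_recursion n eta rho (\<lambda>j. Df j (x k j)) (\<lambda>j. Dphi (x k j))
      (\<lambda>j. x k j - x (k - 1) j) (lam k)"
    using prox_admm_multiplier_recursion[OF admm f_C1 phi_C1 eta_pos, of "k - 1"] k_ge by simp
  have bounds: "\<forall>j\<le>n. norm (Df j (x (Suc k) j)) \<le> Mf
      \<and> norm (Df j (x (Suc k) j) - Df j (x k j)) \<le> Lf * norm (x (Suc k) j - x k j)
      \<and> norm (Dphi (x (Suc k) j)) \<le> Mphi \<and> norm (Dphi (x k j)) \<le> Mphi
      \<and> norm (Dphi (x (Suc k) j) - Dphi (x k j)) \<le> Lphi * norm (x (Suc k) j - x k j)"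
    using A2 xk_S xk1_S unfolding assumption_A2_def by fastforce
  interpret multiplier_difference n eta rho Mf Lf Mphi Lphi
    "\<lambda>j. Df j (x (Suc k) j)" "\<lambda>j. Df j (x k j)" "\<lambda>j. Dphi (x (Suc k) j)" "\<lambda>j. Dphi (x k j)"
    "\<lambda>j. x (Suc k) j - x k j" "\<lambda>j. x k j - x (k - 1) j" "lam (Suc k)" "lam k"
    using recursion_new recursion_old eta_pos rho_pos bounds by unfold_locales auto
  show ?thesis
    using multiplier_diff_sq_le by blast
qed

end
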